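(* Let $n\ge1$ and $G=\mathbf{Z}\times\mathbf{Z}/n\mathbf{Z}$. Let $m$ be a divisor of $n$ and let $(H_k)_{k>0}$ be a sequence of infinite subgroups of $G$ of rank 2. Then $(H_k)_{k>0}$ converges in $\mathcal{C}(G)$ to $\{0\}\times\langle m\rangle$ if and only if, for all $k$ large enough, there exists $g_k\in G$ such that $H_k$ is generated by $(0,m)$ and $g_k$, with $g_k\to\infty$ in $G$ (i.e. $(g_k)$ eventually leaves every finite subset of $G$).
   Context: $\mathcal{C}(G)$ is the set of subgroups of the discrete group $G$ with the Chabauty topology (for discrete $G$, this is the topology induced by the product topology on $\{0,1\}^G$). The rank of a finitely generated group is its minimal number of generators. $\langle m\rangle$ denotes the subgroup of $\mathbf{Z}/n\mathbf{Z}$ generated by the class of $m$. *)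

theory Defs
  imports "HOL-Algebra.Generated_Groups"
begin

text \<open>The group Z x Z/nZ, with Z/nZ represented by the residues {0..<n}.\<close>
definition ZxZn :: "nat \<Rightarrow> (int \<times> int) monoid" where
  "ZxZn n = \<lparr> carrier = {p. 0 \<le> snd p \<and> snd p < int n},
             mult = (\<lambda>x y. (fst x + fst y, (snd x + snd y) mod int n)),
             one = (0, 0) \<rparr>"

definition group_rank :: "('a, 'b) monoid_scheme \<Rightarrow> 'a set \<Rightarrow> nat" where
  "group_rank G H = (LEAST r. \<exists>S. finite S \<and> card S = r \<and> S \<subseteq> H \<and> generate G S = H)"

text \<open>Chabauty convergence for a discrete group: pointwise convergence of
  indicator functions in the product topology on {0,1}^G.\<close>
definition chabauty_tendsto :: "('a, 'b) monoid_scheme \<Rightarrow> (nat \<Rightarrow> 'a set) \<Rightarrow> 'a set \<Rightarrow> bool" where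
  "chabauty_tendsto G Hs L \<longleftrightarrow>
     (\<forall>g \<in> carrier G. eventually (\<lambda>k. (g \<in> Hs k) = (g \<in> L)) sequentially)"

definition tends_to_infinity :: "('a, 'b) monoid_scheme \<Rightarrow> (nat \<Rightarrow> 'a) \<Rightarrow> bool" where
  "tends_to_infinity G g \<longleftrightarrow>
     (\<forall>F. F \<subseteq> carrier G \<and> finite F \<longrightarrow> eventually (\<lambda>k. g k \<notin> F) sequentially)"

end

theory Submission
  imports Defs "HOL-Algebra.Elementary_Groups"
begin

(* Let d > 0 be the least positive first coordinate occurring in an infinite subgroup K of
   Z x Z/nZ, attained at g.  Division with remainder by d shows that K is generated by g together
   with its torsion part K \<inter> ({0} x Z/nZ), and that the elements of K whose first coordinate has
   absolute value below d are exactly those of the torsion part.  Chabauty convergence of H_k to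
   L = {0} x <m> amounts to two things: on the finite set {0} x Z/nZ the H_k eventually agree
   with L, so their torsion parts equal L; and for every N the H_k eventually contain no element
   with first coordinate in 1..N, i.e. d_k tends to infinity. *)

lemma (in group) hom_integer_group_int_pow:
  assumes "\<phi> \<in> hom G integer_group" "x \<in> carrier G"
  shows "\<phi> (x [^] (i::int)) = i * \<phi> x"
  using hom_int_pow[OF assms is_group group_integer_group] by simp

lemma (in group) hom_integer_group_mult:
  assumes "\<phi> \<in> hom G integer_group" "x \<in> carrier G" "y \<in> carrier G"
  shows "\<phi> (x \<otimes> y) = \<phi> x + \<phi> y"
  using hom_mult[OF assms] by simp

lemma (in group) hom_integer_group_generate_singleton_zero:
  assumes "\<phi> \<in> hom G integer_group" "h \<in> carrier G" "\<phi> h = 0" "x \<in> generate G {h}"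
  shows "\<phi> x = 0"
  using assms(4) generate_pow[OF assms(2)]
  by (auto simp: hom_integer_group_int_pow[OF assms(1,2)] assms(3))

lemma (in group) subgroup_ex_least_pos_hom:
  assumes \<phi>: "\<phi> \<in> hom G integer_group" and K: "subgroup K G" and "x \<in> K" "\<phi> x \<noteq> 0"
  shows "\<exists>g\<in>K. 0 < \<phi> g \<and> (\<forall>y\<in>K. 0 < \<phi> y \<longrightarrow> \<phi> g \<le> \<phi> y)"
proof -
  have "\<exists>y\<in>K. 0 < \<phi> y"
  proof (cases "0 < \<phi> x")
    case False
    have "x \<in> carrier G" using assms subgroup.subset by blast
    then have "\<phi> (x [^] (-1::int)) = - \<phi> x" using hom_integer_group_int_pow[OF \<phi>] by simp
    moreover have "x [^] (-1::int) \<in> K" using subgroup_int_pow_closed[OF K \<open>x \<in> K\<close>] .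
    ultimately show ?thesis using False \<open>\<phi> x \<noteq> 0\<close> by (intro bexI[of _ "x [^] (-1::int)"]) auto
  qed (use assms in blast)
  then obtain y where "y \<in> K" "0 < \<phi> y" by blast
  then obtain g where "g \<in> K \<and> 0 < \<phi> g"
    and "\<forall>z. z \<in> K \<and> 0 < \<phi> z \<longrightarrow> nat (\<phi> g) \<le> nat (\<phi> z)"
    using ex_has_least_nat[of "\<lambda>z. z \<in> K \<and> 0 < \<phi> z" y "\<lambda>z. nat (\<phi> z)"] by blast
  then show ?thesis by (fastforce simp: nat_le_eq_zle)
qed

lemma (in group) subgroup_eq_generate_least_pos_hom:
  assumes \<phi>: "\<phi> \<in> hom G integer_group" and K: "subgroup K G"
    and "h \<in> K" "g \<in> K" "0 < \<phi> g"
    and least: "\<And>y. y \<in> K \<Longrightarrow> 0 < \<phi> y \<Longrightarrow> \<phi> g \<le> \<phi> y"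
    and kernel: "\<And>y. y \<in> K \<Longrightarrow> \<phi> y = 0 \<Longrightarrow> y \<in> generate G {h}"
  shows "K = generate G {h, g}"
proof
  interpret \<phi>: group_hom G integer_group \<phi>
    using \<phi> by (simp add: group_hom_def group_hom_axioms_def is_group)
  have carr: "K \<subseteq> carrier G" using K subgroup.subset by blast
  have gen: "subgroup (generate G {h, g}) G"
    using assms carr by (intro generate_is_subgroup) auto
  show "generate G {h, g} \<subseteq> K"
    using assms by (intro generate_subgroup_incl) auto
  show "K \<subseteq> generate G {h, g}"
  proof
    fix x assume "x \<in> K"
    define q where "q = \<phi> x div \<phi> g"
    define r where "r = x \<otimes> inv (g [^] q)"
    have "r \<in> K"
      unfolding r_def using K \<open>x \<in> K\<close> \<open>g \<in> K\<close>
      by (intro subgroup.m_closed subgroup.m_inv_closed subgroup_int_pow_closed)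
    have "x \<in> carrier G" "g \<in> carrier G" using carr \<open>x \<in> K\<close> \<open>g \<in> K\<close> by auto
    then have "\<phi> r = \<phi> x mod \<phi> g"
      by (simp add: r_def q_def hom_integer_group_mult[OF \<phi>] hom_integer_group_int_pow[OF \<phi>]
          minus_div_mult_eq_mod)
    then have "\<phi> r = 0"
      using least[OF \<open>r \<in> K\<close>] \<open>0 < \<phi> g\<close> pos_mod_sign[of "\<phi> g" "\<phi> x"] pos_mod_bound[of "\<phi> g" "\<phi> x"]
      by fastforce
    then have "r \<in> generate G {h, g}"
      using kernel[OF \<open>r \<in> K\<close>] mono_generate[of "{h}" "{h, g}"] by blast
    moreover have "g [^] q \<in> generate G {h, g}"
      by (intro subgroup_int_pow_closed[OF gen] generate.incl) simp
    moreover have "x = r \<otimes> g [^] q"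
      using \<open>x \<in> carrier G\<close> \<open>g \<in> carrier G\<close> by (simp add: r_def m_assoc)
    ultimately show "x \<in> generate G {h, g}" using subgroup.m_closed[OF gen] by metis
  qed
qed

lemma (in comm_group) generate_doubleton_pow:
  assumes "a \<in> carrier G" "b \<in> carrier G"
  shows "generate G {a, b} = {a [^] (i::int) \<otimes> b [^] (j::int) | i j. True}"
    (is "_ = ?P")
proof
  have sub: "subgroup (generate G {a, b}) G"
    using assms by (intro generate_is_subgroup) auto
  have "a \<in> generate G {a, b}" "b \<in> generate G {a, b}"
    by (auto intro: generate.incl)
  then show "?P \<subseteq> generate G {a, b}"
    using subgroup.m_closed[OF sub] subgroup_int_pow_closed[OF sub] by blast
  have "subgroup ?P G"
  proof (rule subgroupI)
    show "?P \<subseteq> carrier G" using assms by auto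
    show "?P \<noteq> {}" by blast
  next
    fix x assume "x \<in> ?P"
    then obtain i j where "x = a [^] (i::int) \<otimes> b [^] (j::int)" by blast
    then have "inv x = a [^] (- i) \<otimes> b [^] (- j)"
      using assms by (simp add: inv_mult int_pow_neg)
    then show "inv x \<in> ?P" by blast
  next
    fix x y assume "x \<in> ?P" "y \<in> ?P"
    then obtain i j i' j'
      where "x = a [^] (i::int) \<otimes> b [^] (j::int)" "y = a [^] (i'::int) \<otimes> b [^] (j'::int)"
      by blast
    then have "x \<otimes> y = a [^] (i + i') \<otimes> b [^] (j + j')"
      using assms by (simp add: int_pow_mult m_ac)
    then show "x \<otimes> y \<in> ?P" by blast
  qed
  moreover have "{a, b} \<subseteq> ?P"
  proof -
    have "a = a [^] (1::int) \<otimes> b [^] (0::int)" "b = a [^] (0::int) \<otimes> b [^] (1::int)"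
      using assms by simp_all
    then show ?thesis by blast
  qed
  ultimately show "generate G {a, b} \<subseteq> ?P" by (intro generate_subgroup_incl)
qed

lemma (in comm_group) generate_doubleton_hom_small_iff:
  assumes \<phi>: "\<phi> \<in> hom G integer_group" and "h \<in> carrier G" "g \<in> carrier G" "\<phi> h = 0"
    and small: "\<bar>\<phi> x\<bar> < \<bar>\<phi> g\<bar>"
  shows "x \<in> generate G {h, g} \<longleftrightarrow> x \<in> generate G {h}"
proof
  assume "x \<in> generate G {h, g}"
  then obtain i j where x: "x = h [^] (i::int) \<otimes> g [^] (j::int)"
    using generate_doubleton_pow assms by blast
  then have "\<phi> x = j * \<phi> g"
    using assms by (simp add: hom_integer_group_mult[OF \<phi>] hom_integer_group_int_pow[OF \<phi>])
  then have "\<bar>j\<bar> * \<bar>\<phi> g\<bar> < 1 * \<bar>\<phi> g\<bar>"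
    using small by (simp add: abs_mult)
  then have "\<bar>j\<bar> < 1"
    by (rule mult_right_less_imp_less) simp
  then have "j = 0"
    by simp
  then show "x \<in> generate G {h}"
    using x assms generate_pow[of h] by auto
next
  show "x \<in> generate G {h} \<Longrightarrow> x \<in> generate G {h, g}"
    using mono_generate[of "{h}" "{h, g}"] by blast
qed

lemma carrier_ZxZn [simp]: "x \<in> carrier (ZxZn n) \<longleftrightarrow> 0 \<le> snd x \<and> snd x < int n"
  by (simp add: ZxZn_def)

lemma mult_ZxZn [simp]: "x \<otimes>\<^bsub>ZxZn n\<^esub> y = (fst x + fst y, (snd x + snd y) mod int n)"
  by (simp add: ZxZn_def)

lemma one_ZxZn [simp]: "\<one>\<^bsub>ZxZn n\<^esub> = (0, 0)"
  by (simp add: ZxZn_def)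

lemma comm_group_ZxZn:
  assumes "n \<ge> 1"
  shows "comm_group (ZxZn n)"
proof (rule group.group_comm_groupI)
  show "group (ZxZn n)"
  proof (rule groupI)
    fix x assume "x \<in> carrier (ZxZn n)"
    have "((- snd x) mod int n + snd x) mod int n = 0"
      by (simp add: mod_add_left_eq)
    then show "\<exists>y\<in>carrier (ZxZn n). y \<otimes>\<^bsub>ZxZn n\<^esub> x = \<one>\<^bsub>ZxZn n\<^esub>"
      using assms by (intro bexI[of _ "(- fst x, (- snd x) mod int n)"]) auto
  qed (use assms in \<open>auto simp: mod_add_left_eq mod_add_right_eq add.assoc\<close>)
qed (auto simp: add.commute)

lemma fst_hom_ZxZn: "fst \<in> hom (ZxZn n) integer_group"
  by (rule homI) auto

lemma finite_ZxZn_fst_bounded: "finite {x \<in> carrier (ZxZn n). \<bar>fst x\<bar> \<le> N}"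
proof (rule finite_subset)
  show "{x \<in> carrier (ZxZn n). \<bar>fst x\<bar> \<le> N} \<subseteq> {-N..N} \<times> {0..<int n}"
    by force
qed simp

lemma ZxZn_infinite_subgroup_ex_least_pos_fst:
  assumes "n \<ge> 1" "subgroup K (ZxZn n)" "infinite K"
  shows "\<exists>g\<in>K. 0 < fst g \<and> (\<forall>y\<in>K. 0 < fst y \<longrightarrow> fst g \<le> fst y)"
proof -
  have "\<not> K \<subseteq> {x \<in> carrier (ZxZn n). \<bar>fst x\<bar> \<le> 0}"
    using assms(3) finite_subset finite_ZxZn_fst_bounded by blast
  then obtain x where "x \<in> K" "fst x \<noteq> 0"
    using subgroup.subset[OF assms(2)] by auto
  then show ?thesis
    using comm_group.axioms(2)[OF comm_group_ZxZn[OF assms(1)]]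
    by (intro group.subgroup_ex_least_pos_hom[OF _ fst_hom_ZxZn assms(2)])
qed

lemma chabauty_tendsto_eventually_Int_eq:
  assumes "chabauty_tendsto G H L" "finite S" "S \<subseteq> carrier G"
  shows "\<forall>\<^sub>F k in sequentially. H k \<inter> S = L \<inter> S"
proof -
  have "\<forall>\<^sub>F k in sequentially. \<forall>x\<in>S. (x \<in> H k) = (x \<in> L)"
    using assms unfolding chabauty_tendsto_def by (intro eventually_ball_finite) auto
  then show ?thesis by (rule eventually_mono) blast
qed

lemma tends_to_infinity_ZxZn_iff:
  assumes carrier: "\<forall>\<^sub>F k in sequentially. g k \<in> carrier (ZxZn n)"
  shows "tends_to_infinity (ZxZn n) g \<longleftrightarrow> (\<forall>N. \<forall>\<^sub>F k in sequentially. N < \<bar>fst (g k)\<bar>)"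
proof (intro iffI allI)
  fix N
  let ?B = "{x \<in> carrier (ZxZn n). \<bar>fst x\<bar> \<le> N}"
  assume "tends_to_infinity (ZxZn n) g"
  moreover have "?B \<subseteq> carrier (ZxZn n) \<and> finite ?B"
    using finite_ZxZn_fst_bounded by blast
  ultimately have "\<forall>\<^sub>F k in sequentially. g k \<notin> ?B"
    unfolding tends_to_infinity_def by blast
  with carrier show "\<forall>\<^sub>F k in sequentially. N < \<bar>fst (g k)\<bar>"
    by eventually_elim auto
next
  assume large: "\<forall>N. \<forall>\<^sub>F k in sequentially. N < \<bar>fst (g k)\<bar>"
  show "tends_to_infinity (ZxZn n) g"
    unfolding tends_to_infinity_def
  proof (intro allI impI)
    fix F assume "F \<subseteq> carrier (ZxZn n) \<and> finite F"
    then have bound: "\<bar>fst y\<bar> \<le> (\<Sum>z\<in>F. \<bar>fst z\<bar>)" if "y \<in> F" for y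
      using that by (intro member_le_sum) auto
    show "\<forall>\<^sub>F k in sequentially. g k \<notin> F"
      using large[rule_format, of "\<Sum>z\<in>F. \<bar>fst z\<bar>"] by (rule eventually_mono) (use bound in fastforce)
  qed
qed

lemma ZxZn_chabauty_tendsto_imp_generate:
  assumes n: "n \<ge> 1" and h: "h \<in> carrier (ZxZn n)" "fst h = 0"
    and H: "\<forall>\<^sub>F k in sequentially. subgroup (H k) (ZxZn n) \<and> infinite (H k)"
    and conv: "chabauty_tendsto (ZxZn n) H (generate (ZxZn n) {h})"
  shows "\<exists>g. (\<forall>\<^sub>F k in sequentially. g k \<in> carrier (ZxZn n) \<and> H k = generate (ZxZn n) {h, g k})
           \<and> tends_to_infinity (ZxZn n) g"
proof -
  interpret comm_group "ZxZn n" by (rule comm_group_ZxZn[OF n])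
  define L where "L = generate (ZxZn n) {h}"
  define B where "B N = {x \<in> carrier (ZxZn n). \<bar>fst x\<bar> \<le> N}" for N
  define g where "g k = (SOME g. g \<in> H k \<and> 0 < fst g \<and> (\<forall>y\<in>H k. 0 < fst y \<longrightarrow> fst g \<le> fst y))"
    for k
  have L_fst: "fst x = 0" if "x \<in> L" for x
    using hom_integer_group_generate_singleton_zero[OF fst_hom_ZxZn h] that unfolding L_def .
  have L_B: "L \<subseteq> B 0"
  proof
    fix x assume "x \<in> L"
    then have "x \<in> carrier (ZxZn n)"
      using generate_in_carrier[of "{h}" x] h(1) unfolding L_def by blast
    then show "x \<in> B 0"
      using L_fst[OF \<open>x \<in> L\<close>] unfolding B_def by simp
  qed
  have agree: "\<forall>\<^sub>F k in sequentially. H k \<inter> B N = L \<inter> B N" for N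
    using chabauty_tendsto_eventually_Int_eq[OF conv[folded L_def]] finite_ZxZn_fst_bounded
    unfolding B_def by blast
  have least: "g k \<in> H k \<and> 0 < fst (g k) \<and> (\<forall>y\<in>H k. 0 < fst y \<longrightarrow> fst (g k) \<le> fst y)"
    if "subgroup (H k) (ZxZn n)" "infinite (H k)" for k
    unfolding g_def by (rule someI_ex) (use ZxZn_infinite_subgroup_ex_least_pos_fst[OF n that] in blast)
  have gen: "\<forall>\<^sub>F k in sequentially. g k \<in> carrier (ZxZn n) \<and> H k = generate (ZxZn n) {h, g k}"
    using H agree[of 0]
  proof eventually_elim
    case (elim k)
    then have sub: "subgroup (H k) (ZxZn n)" by blast
    have HL: "H k \<inter> B 0 = L"
      using elim(2) L_B by auto
    have "h \<in> H k"
      using HL generate.incl[of h "{h}" "ZxZn n"] unfolding L_def by blast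
    have torsion: "y \<in> L" if "y \<in> H k" "fst y = 0" for y
    proof -
      have "y \<in> H k \<inter> B 0"
        using that subgroup.subset[OF sub] unfolding B_def by auto
      then show ?thesis by (simp add: HL)
    qed
    obtain "g k \<in> H k" "0 < fst (g k)" "\<And>y. y \<in> H k \<Longrightarrow> 0 < fst y \<Longrightarrow> fst (g k) \<le> fst y"
      using least elim(1) by blast
    then show ?case
      using subgroup_eq_generate_least_pos_hom[OF fst_hom_ZxZn sub \<open>h \<in> H k\<close>] torsion
        subgroup.subset[OF sub] unfolding L_def by blast
  qed
  have g_carrier: "\<forall>\<^sub>F k in sequentially. g k \<in> carrier (ZxZn n)"
    using gen by (rule eventually_mono) blast
  have "tends_to_infinity (ZxZn n) g"
    unfolding tends_to_infinity_ZxZn_iff[OF g_carrier]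
  proof
    fix N
    show "\<forall>\<^sub>F k in sequentially. N < \<bar>fst (g k)\<bar>"
      using H agree[of N]
    proof eventually_elim
      case (elim k)
      then have "g k \<in> H k" "0 < fst (g k)"
        using least by blast+
      then have "g k \<notin> L \<inter> B N"
        using L_fst by fastforce
      then have "g k \<notin> B N"
        using elim(2) \<open>g k \<in> H k\<close> by blast
      moreover have "g k \<in> carrier (ZxZn n)"
        using elim(1) \<open>g k \<in> H k\<close> subgroup.subset by blast
      ultimately show ?case
        unfolding B_def by auto
    qed
  qed
  with gen show ?thesis unfolding L_def by blast
qed

lemma ZxZn_generate_imp_chabauty_tendsto:
  assumes n: "n \<ge> 1" and h: "h \<in> carrier (ZxZn n)" "fst h = 0"
    and gen: "\<forall>\<^sub>F k in sequentially. g k \<in> carrier (ZxZn n) \<and> H k = generate (ZxZn n) {h, g k}"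
    and g: "tends_to_infinity (ZxZn n) g"
  shows "chabauty_tendsto (ZxZn n) H (generate (ZxZn n) {h})"
  unfolding chabauty_tendsto_def
proof
  fix x assume "x \<in> carrier (ZxZn n)"
  have g_carrier: "\<forall>\<^sub>F k in sequentially. g k \<in> carrier (ZxZn n)"
    using gen by (rule eventually_mono) blast
  have "\<forall>\<^sub>F k in sequentially. \<bar>fst x\<bar> < \<bar>fst (g k)\<bar>"
    using g tends_to_infinity_ZxZn_iff[OF g_carrier] by blast
  with gen show "\<forall>\<^sub>F k in sequentially. (x \<in> H k) = (x \<in> generate (ZxZn n) {h})"
    by eventually_elim
      (simp add: comm_group.generate_doubleton_hom_small_iff[OF comm_group_ZxZn[OF n] fst_hom_ZxZn h(1) _ h(2)])
qed

lemma ZxZn_chabauty_tendsto_iff_generate: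
  assumes "n \<ge> 1" "h \<in> carrier (ZxZn n)" "fst h = 0"
    and "\<forall>\<^sub>F k in sequentially. subgroup (H k) (ZxZn n) \<and> infinite (H k)"
  shows "chabauty_tendsto (ZxZn n) H (generate (ZxZn n) {h}) \<longleftrightarrow>
    (\<exists>g. (\<forall>\<^sub>F k in sequentially. g k \<in> carrier (ZxZn n) \<and> H k = generate (ZxZn n) {h, g k})
         \<and> tends_to_infinity (ZxZn n) g)"
  using ZxZn_chabauty_tendsto_imp_generate[OF assms] ZxZn_generate_imp_chabauty_tendsto[OF assms(1-3)]
  by blast

theorem proposition3:
  fixes n m :: nat and H :: "nat \<Rightarrow> (int \<times> int) set"
  assumes "n \<ge> 1"
    and "m dvd n"
    and "\<forall>k>0. subgroup (H k) (ZxZn n) \<and> infinite (H k) \<and> group_rank (ZxZn n) (H k) = 2"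
  shows "chabauty_tendsto (ZxZn n) H (generate (ZxZn n) {(0, int m mod int n)})
     \<longleftrightarrow> (\<exists>g :: nat \<Rightarrow> int \<times> int.
            (\<forall>\<^sub>F k in sequentially. g k \<in> carrier (ZxZn n) \<and>
                 H k = generate (ZxZn n) {(0, int m mod int n), g k})
            \<and> tends_to_infinity (ZxZn n) g)"
proof -
  have h: "(0, int m mod int n) \<in> carrier (ZxZn n)" "fst (0::int, int m mod int n) = 0"
    using assms(1) by auto
  have H: "\<forall>\<^sub>F k in sequentially. subgroup (H k) (ZxZn n) \<and> infinite (H k)"
    using eventually_gt_at_top[of 0] by (rule eventually_mono) (use assms(3) in blast)
  show ?thesis
    by (rule ZxZn_chabauty_tendsto_iff_generate[OF assms(1) h H])
qed

end
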